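(* Consider the input-output system $\dot{\mathbf x}=\mathbf F(\mathbf x,u):=\mathbf f(\mathbf x)+\hat{\mathbf e}_1 g(u,x_1)$, $u\in J$, satisfying assumption (A0). Let $\mathbf x^*(u)$, $u\in J$, be a continuously differentiable curve of steady states ($\mathbf F(\mathbf x^*(u),u)=\mathbf 0$) along which $\frac{\partial \mathbf F}{\partial\mathbf x}(\mathbf x^*(u),u)$ is nonsingular, and let $\mathbf J^*=\frac{\partial\mathbf f}{\partial\mathbf x}(\mathbf x^*(u))$. Fix $j\in\{1,\ldots,n\}$. Then: (1) (Flow) $\displaystyle \frac{\partial x_j^*}{\partial u}=\frac{(-1)^j\,\mathbf J^*[\hat 1,\hat j]}{\det \mathbf J^*}$; (2) (Activation) $\displaystyle \frac{\partial x_j^*}{\partial u}=\frac{(-1)^j(x_T-x_1^* )\,\mathbf J^*[\hat 1,\hat j]}{\det\big(\mathbf J^*-\hat{\mathbf e}_{11}[u+k_{\mathrm{on}}+k_{\mathrm{off}}]\big)}$; (3) (Inhibition) $\displaystyle \frac{\partial x_j^*}{\partial u}=\frac{(-1)^{j+1}x_1^*\,\mathbf J^*[\hat 1,\hat j]}{\det\big(\mathbf J^*-\hat{\mathbf e}_{11}[u+k_{\mathrm{on}}+k_{\mathrm{off}}]\big)}$.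
   Context: $\mathcal X\subset\mathbb R^n$, $J\subset\mathbb R$ is an interval, and $\mathbf f:\mathcal X\to\mathbb R^n$ is $C^1$, with every entry of $\frac{\partial\mathbf f}{\partial\mathbf x}$ of constant sign on $\mathcal X$ and negative diagonal entries. $\hat{\mathbf e}_1$ is the first standard basis vector and $\hat{\mathbf e}_{11}$ the matrix with $1$ in position $(1,1)$ and zeros elsewhere. The control term $g$ is one of: flow, $g(u,x_1)=u$; activation, $g(u,x_1)=(u+k_{\mathrm{on}})(x_T-x_1)-k_{\mathrm{off}}x_1$; inhibition, $g(u,x_1)=k_{\mathrm{on}}(x_T-x_1)-(u+k_{\mathrm{off}})x_1$, with constants $x_T,k_{\mathrm{on}},k_{\mathrm{off}}>0$. Assumption (A0): for every $u_0\in J$ there is $\mathbf x_0\in\mathcal X$ with $\mathbf F(\mathbf x_0,u_0)=\mathbf 0$ and $\frac{\partial\mathbf F}{\partial\mathbf x}(\mathbf x_0,u_0)$ of full rank. For a matrix $\mathbf M$, $\mathbf M[\hat 1,\hat j]$ is the determinant of $\mathbf M$ with row $1$ and column $j$ deleted. *)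

theory Defs
  imports "HOL-Analysis.Analysis"
begin

text \<open>Coordinates of R^n are labelled by a finite type 'n together with a numbering
  num : {1..n} -> 'n (a bijection), so that coordinate k (1-based, as in the paper)
  is num k.\<close>

definition det_nat :: "nat \<Rightarrow> (nat \<Rightarrow> nat \<Rightarrow> real) \<Rightarrow> real" where
  "det_nat m M = (\<Sum>p | p permutes {1..m}. of_int (sign p) * (\<Prod>i=1..m. M i (p i)))"

text \<open>M[r-hat, c-hat]: determinant of M with row r and column c deleted (1-based).\<close>
definition minor_det :: "(nat \<Rightarrow> 'n::finite) \<Rightarrow> real^'n^'n \<Rightarrow> nat \<Rightarrow> nat \<Rightarrow> real" where
  "minor_det num M r c = det_nat (CARD('n) - 1)
     (\<lambda>a b. M $ num (if a < r then a else a + 1) $ num (if b < c then b else b + 1))"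

definition e1 :: "(nat \<Rightarrow> 'n::finite) \<Rightarrow> real^'n" where
  "e1 num = axis (num 1) 1"

definition e11 :: "(nat \<Rightarrow> 'n::finite) \<Rightarrow> real^'n^'n" where
  "e11 num = (\<chi> i k. if i = num 1 \<and> k = num 1 then 1 else 0)"

definition Fsys :: "(nat \<Rightarrow> 'n::finite) \<Rightarrow> (real^'n \<Rightarrow> real^'n) \<Rightarrow> (real \<Rightarrow> real \<Rightarrow> real)
    \<Rightarrow> real^'n \<Rightarrow> real \<Rightarrow> real^'n" where
  "Fsys num f g x u = f x + g u (x $ num 1) *\<^sub>R e1 num"

definition g_flow :: "real \<Rightarrow> real \<Rightarrow> real" where
  "g_flow u x1 = u"

definition g_act :: "real \<Rightarrow> real \<Rightarrow> real \<Rightarrow> real \<Rightarrow> real \<Rightarrow> real" where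
  "g_act xT kon koff u x1 = (u + kon) * (xT - x1) - koff * x1"

definition g_inh :: "real \<Rightarrow> real \<Rightarrow> real \<Rightarrow> real \<Rightarrow> real \<Rightarrow> real" where
  "g_inh xT kon koff u x1 = kon * (xT - x1) - (u + koff) * x1"

end

theory Submission
  imports Defs
begin

text \<open>Differentiating the steady-state identity F(x*(u), u) = 0 gives the linear system
  (\<partial>F/\<partial>x) x*' = -(\<partial>g/\<partial>u) e_1 with \<partial>F/\<partial>x = J* + (\<partial>g/\<partial>x_1) e_11.
  All three control terms have the form a + b u + c x_1 + d u x_1, so both partial
  derivatives of g are explicit. By Cramer's rule x_j*' is a quotient of determinants whose
  numerator has a multiple of e_1 as its j-th column; expanding along that column leaves the
  signed minor (1, j), which is blind to the rank-one correction in position (1, 1).\<close>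

definition det_on :: "'a set \<Rightarrow> ('a \<Rightarrow> 'a \<Rightarrow> real) \<Rightarrow> real" where
  "det_on S M = (\<Sum>p | p permutes S. of_int (sign p) * (\<Prod>i\<in>S. M i (p i)))"

lemma det_eq_det_on: "det (A::real^'n^'n) = det_on UNIV (\<lambda>i k. A$i$k)"
  by (simp add: det_def det_on_def)

lemma det_nat_eq_det_on: "det_nat m M = det_on {1..m} M"
  by (simp add: det_nat_def det_on_def)

lemma det_on_cong:
  assumes "\<And>a b. a \<in> S \<Longrightarrow> b \<in> S \<Longrightarrow> M a b = M' a b"
  shows "det_on S M = det_on S M'"
  unfolding det_on_def
  using assms permutes_in_image by (intro sum.cong prod.cong) fastforce+

lemma det_on_reindex:
  assumes h: "bij_betw h S T" and fin: "finite S"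
  shows "det_on T M = det_on S (\<lambda>a b. M (h a) (h b))"
proof -
  let ?lift = "\<lambda>\<pi> x. if x \<in> T then h (\<pi> (inv_into S h x)) else x"
  have hS: "h ` S = T" and inj: "inj_on h S" using h by (auto simp: bij_betw_def)
  have "det_on T M = (\<Sum>\<pi> | \<pi> permutes S. of_int (sign (?lift \<pi>)) * (\<Prod>i\<in>T. M i (?lift \<pi> i)))"
    unfolding det_on_def by (rule sum.reindex_bij_betw[OF bij_betw_permutations[OF h], symmetric])
  also have "\<dots> = det_on S (\<lambda>a b. M (h a) (h b))"
    unfolding det_on_def
  proof (rule sum.cong[OF refl])
    fix \<pi> assume "\<pi> \<in> {\<pi>. \<pi> permutes S}"
    then have \<pi>: "\<pi> permutes S" by simp
    have "?lift \<pi> = map_permutation S h \<pi>"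
      by (simp add: map_permutation_def restrict_id_def hS fun_eq_iff)
    then have sign_lift: "sign (?lift \<pi>) = sign \<pi>"
      using sign_map_permutation[OF inj \<pi> fin] by simp
    have "(\<Prod>i\<in>T. M i (?lift \<pi> i)) = (\<Prod>a\<in>S. M (h a) (?lift \<pi> (h a)))"
      by (rule prod.reindex_bij_betw[OF h, symmetric])
    also have "\<dots> = (\<Prod>a\<in>S. M (h a) (h (\<pi> a)))"
      using inj hS by (intro prod.cong) (auto simp: inv_into_f_f)
    finally show "of_int (sign (?lift \<pi>)) * (\<Prod>i\<in>T. M i (?lift \<pi> i)) =
        of_int (sign \<pi>) * (\<Prod>a\<in>S. M (h a) (h (\<pi> a)))"
      using sign_lift by simp
  qed
  finally show ?thesis .
qed

lemma det_on_permute_columns: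
  assumes \<sigma>: "\<sigma> permutes S" and fin: "finite S"
  shows "det_on S M = of_int (sign \<sigma>) * det_on S (\<lambda>a b. M a (\<sigma> b))"
proof -
  have "det_on S M = (\<Sum>p | p permutes S. of_int (sign (\<sigma> \<circ> p)) * (\<Prod>i\<in>S. M i ((\<sigma> \<circ> p) i)))"
    unfolding det_on_def by (rule setum_permutations_compose_left[OF \<sigma>])
  also have "\<dots> = (\<Sum>p | p permutes S. of_int (sign \<sigma>) * (of_int (sign p) * (\<Prod>i\<in>S. M i (\<sigma> (p i)))))"
  proof (rule sum.cong[OF refl])
    fix p assume "p \<in> {p. p permutes S}"
    then have "permutation \<sigma>" "permutation p" using \<sigma> fin permutation_permutes by blast+
    then show "of_int (sign (\<sigma> \<circ> p)) * (\<Prod>i\<in>S. M i ((\<sigma> \<circ> p) i)) =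
        of_int (sign \<sigma>) * (of_int (sign p) * (\<Prod>i\<in>S. M i (\<sigma> (p i))))"
      by (simp add: sign_compose)
  qed
  also have "\<dots> = of_int (sign \<sigma>) * det_on S (\<lambda>a b. M a (\<sigma> b))"
    unfolding det_on_def by (simp add: sum_distrib_left)
  finally show ?thesis .
qed

lemma det_on_single_entry_column:
  assumes fin: "finite S" and r: "r \<in> S" and zero: "\<And>i. i \<in> S \<Longrightarrow> i \<noteq> r \<Longrightarrow> M i r = 0"
  shows "det_on S M = M r r * det_on (S - {r}) M"
proof -
  let ?term = "\<lambda>p. of_int (sign p) * (\<Prod>i\<in>S. M i (p i))"
  have vanish: "?term p = 0" if "p permutes S" "\<not> p permutes (S - {r})" for p
  proof -
    have "p r \<noteq> r"
      using that by (metis Diff_iff permutes_superset singleton_iff)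
    define i where "i = inv p r"
    have "p i = r" unfolding i_def using permutes_inverses(1)[OF that(1)] by simp
    have "i \<in> S" unfolding i_def using permutes_in_image[OF permutes_inv[OF that(1)]] r by simp
    have "M i (p i) = 0" using zero[OF \<open>i \<in> S\<close>] \<open>p i = r\<close> \<open>p r \<noteq> r\<close> by metis
    with \<open>i \<in> S\<close> fin show ?thesis by auto
  qed
  have "det_on S M = (\<Sum>p | p permutes (S - {r}). ?term p)"
    unfolding det_on_def
    using vanish fin by (intro sum.mono_neutral_right) (auto intro: permutes_subset finite_permutations)
  also have "\<dots> = M r r * det_on (S - {r}) M"
    unfolding det_on_def sum_distrib_left
  proof (rule sum.cong[OF refl])
    fix p assume "p \<in> {p. p permutes S - {r}}"
    then have "p r = r" by (simp add: permutes_not_in)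
    then show "?term p = M r r * (of_int (sign p) * (\<Prod>i\<in>S - {r}. M i (p i)))"
      using prod.remove[OF fin r, of "\<lambda>i. M i (p i)"] by simp
  qed
  finally show ?thesis .
qed

definition cycle_to_front :: "nat \<Rightarrow> nat \<Rightarrow> nat" where
  "cycle_to_front j b = (if b = 1 then j else if 2 \<le> b \<and> b \<le> j then b - 1 else b)"

lemma cycle_to_front_permutes_sign:
  assumes "1 \<le> j" "j \<le> n"
  shows "cycle_to_front j permutes {1..n} \<and> sign (cycle_to_front j) = (-1) ^ (j - 1)"
  using assms
proof (induction j)
  case 0
  then show ?case by simp
next
  case (Suc j)
  show ?case
  proof (cases "j = 0")
    case True
    then have "cycle_to_front (Suc j) = id" by (auto simp: cycle_to_front_def fun_eq_iff)
    then show ?thesis using True permutes_id[of "{1..n}"] by (simp add: id_def)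
  next
    case False
    let ?\<tau> = "Transposition.transpose j (Suc j)"
    have IH: "cycle_to_front j permutes {1..n}" "sign (cycle_to_front j) = (-1) ^ (j - 1)"
      using Suc False by simp_all
    have step: "cycle_to_front (Suc j) = ?\<tau> \<circ> cycle_to_front j"
      using False by (auto simp: cycle_to_front_def fun_eq_iff Transposition.transpose_def)
    have \<tau>: "?\<tau> permutes {1..n}"
      using False Suc.prems by (intro permutes_swap_id) auto
    have "sign (cycle_to_front (Suc j)) = sign ?\<tau> * sign (cycle_to_front j)"
      unfolding step using IH(1) \<tau> by (intro sign_compose) (auto intro: permutes_imp_permutation)
    also have "\<dots> = (-1) ^ (Suc j - 1)"
      using IH(2) False by (cases j) (simp_all add: sign_swap_id)
    moreover have "cycle_to_front (Suc j) permutes {1..n}"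
      unfolding step using IH(1) \<tau> by (rule permutes_compose)
    ultimately show ?thesis by simp
  qed
qed

lemma det_replace_column_e1:
  fixes A :: "real^'n^'n" and num :: "nat \<Rightarrow> 'n"
  assumes num: "bij_betw num {1..CARD('n)} UNIV" and j: "j \<in> {1..CARD('n)}"
  shows "det (\<chi> i k. if k = num j then (c *\<^sub>R e1 num) $ i else A $ i $ k)
         = (-1) ^ (j + 1) * c * minor_det num A 1 j"
proof -
  define n where "n = CARD('n)"
  define B :: "real^'n^'n" where "B = (\<chi> i k. if k = num j then (c *\<^sub>R e1 num) $ i else A $ i $ k)"
  define \<sigma> where "\<sigma> = cycle_to_front j"
  define N where "N = (\<lambda>a b. B $ num a $ num (\<sigma> b))"
  have n1: "1 \<le> n" unfolding n_def by (simp add: Suc_le_eq)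
  have inj: "inj_on num {1..n}" using num unfolding n_def by (simp add: bij_betw_def)
  have jn: "1 \<le> j" "j \<le> n" using j unfolding n_def by auto
  have \<sigma>: "\<sigma> permutes {1..n}" "sign \<sigma> = (-1) ^ (j - 1)"
    unfolding \<sigma>_def using cycle_to_front_permutes_sign[OF jn] by simp_all
  have "det B = det_on {1..n} (\<lambda>a b. B $ num a $ num b)"
    unfolding det_eq_det_on n_def by (rule det_on_reindex[OF num]) simp
  also have "\<dots> = of_int (sign \<sigma>) * det_on {1..n} N"
    unfolding N_def by (rule det_on_permute_columns) (use \<sigma> in auto)
  also have "det_on {1..n} N = N 1 1 * det_on ({1..n} - {1}) N"
  proof (rule det_on_single_entry_column)
    fix i assume "i \<in> {1..n}" "i \<noteq> 1"
    then have "num i \<noteq> num 1" using inj n1 by (auto dest: inj_onD)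
    then show "N i 1 = 0" by (simp add: N_def B_def \<sigma>_def cycle_to_front_def e1_def axis_def)
  qed (use n1 in auto)
  also have "N 1 1 = c" by (simp add: N_def B_def \<sigma>_def cycle_to_front_def e1_def)
  also have "{1..n} - {1} = Suc ` {1..n - 1}" using n1 by (auto simp: image_Suc_atLeastAtMost)
  also have "det_on (Suc ` {1..n - 1}) N = det_on {1..n - 1} (\<lambda>a b. N (Suc a) (Suc b))"
    by (rule det_on_reindex) (simp_all add: bij_betw_def)
  also have "\<dots> = minor_det num A 1 j"
    unfolding minor_det_def det_nat_eq_det_on n_def[symmetric]
  proof (rule det_on_cong)
    fix a b assume a: "a \<in> {1..n - 1}" and b: "b \<in> {1..n - 1}"
    have \<sigma>_Suc: "\<sigma> (Suc b) = (if b < j then b else b + 1)"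
      using b unfolding \<sigma>_def cycle_to_front_def by auto
    then have "num (\<sigma> (Suc b)) \<noteq> num j"
      using inj b jn by (auto dest: inj_onD)
    then show "N (Suc a) (Suc b) = A $ num (if a < 1 then a else a + 1) $ num (if b < j then b else b + 1)"
      using a \<sigma>_Suc by (simp add: N_def B_def)
  qed
  finally show ?thesis
    unfolding B_def using \<sigma>(2) jn by (cases j) simp_all
qed

lemma cramer_e1:
  fixes A :: "real^'n^'n" and num :: "nat \<Rightarrow> 'n"
  assumes num: "bij_betw num {1..CARD('n)} UNIV" and j: "j \<in> {1..CARD('n)}"
    and "det A \<noteq> 0" and Ax: "A *v x = c *\<^sub>R e1 num"
  shows "x $ num j = (-1) ^ (j + 1) * c * minor_det num A 1 j / det A"
proof -
  have "x $ num j * det A = (-1) ^ (j + 1) * c * minor_det num A 1 j"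
    using cramer_lemma[where A = A and k = "num j" and x = x] det_replace_column_e1[OF num j]
    unfolding Ax by simp
  with \<open>det A \<noteq> 0\<close> show ?thesis by (simp add: field_simps)
qed

lemma minor_det_add_e11:
  assumes num: "bij_betw num {1..CARD('n::finite)} UNIV"
  shows "minor_det num (A + k *\<^sub>R e11 num) 1 j = minor_det num (A::real^'n^'n) 1 j"
  unfolding minor_det_def det_nat_eq_det_on
proof (rule det_on_cong)
  fix a b assume a: "a \<in> {1..CARD('n) - 1}"
  have "num (a + 1) \<noteq> num 1"
    using num a by (auto simp: bij_betw_def Suc_le_eq dest: inj_onD)
  then show "(A + k *\<^sub>R e11 num) $ num (if a < 1 then a else a + 1) $ num (if b < j then b else b + 1) =
        A $ num (if a < 1 then a else a + 1) $ num (if b < j then b else b + 1)"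
    using a by (simp add: e11_def)
qed

lemma e11_mult_vec: "e11 num *v h = h $ num 1 *\<^sub>R e1 num"
  by (simp add: vec_eq_iff matrix_vector_mult_def e11_def e1_def axis_def mult_delta_left)

lemma has_vector_derivative_zero_on_interval:
  fixes \<phi> :: "real \<Rightarrow> 'a::real_normed_vector"
  assumes J: "is_interval J" "\<exists>a\<in>J. \<exists>b\<in>J. a < b" and u: "u \<in> J"
    and zero: "\<And>v. v \<in> J \<Longrightarrow> \<phi> v = 0"
    and \<phi>: "(\<phi> has_vector_derivative V) (at u within J)"
  shows "V = 0"
proof -
  have "u islimpt J"
    using J by (intro connected_imp_perfect[OF is_interval_connected u]) auto
  then have "at u within J \<noteq> bot" by (simp add: trivial_limit_within)
  moreover have "((\<lambda>v. 0) has_vector_derivative V) (at u within J)"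
    by (rule has_vector_derivative_transform_within[OF \<phi> zero_less_one u]) (use zero in auto)
  ultimately show ?thesis
    using vector_derivative_unique_within has_vector_derivative_const by blast
qed

definition affine_bilinear :: "real \<Rightarrow> real \<Rightarrow> real \<Rightarrow> real \<Rightarrow> real \<Rightarrow> real \<Rightarrow> real" where
  "affine_bilinear a b c d v x1 = a + b * v + c * x1 + d * v * x1"

lemma g_flow_eq_affine_bilinear: "g_flow = affine_bilinear 0 1 0 0"
  by (simp add: fun_eq_iff g_flow_def affine_bilinear_def)

lemma g_act_eq_affine_bilinear:
  "g_act xT kon koff = affine_bilinear (kon * xT) xT (- (kon + koff)) (- 1)"
  by (simp add: fun_eq_iff g_act_def affine_bilinear_def algebra_simps)

lemma g_inh_eq_affine_bilinear:
  "g_inh xT kon koff = affine_bilinear (kon * xT) 0 (- (kon + koff)) (- 1)"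
  by (simp add: fun_eq_iff g_inh_def affine_bilinear_def algebra_simps)

lemma Fsys_affine_bilinear:
  "Fsys num f (affine_bilinear a b c d) x v
   = f x + (a + b * v + c * x $ num 1 + d * v * x $ num 1) *\<^sub>R e1 num"
  by (simp add: Fsys_def affine_bilinear_def)

lemma jacobian_Fsys_affine_bilinear:
  assumes "f differentiable (at x)"
  shows "jacobian (\<lambda>x. Fsys num f (affine_bilinear a b c d) x u) (at x)
         = jacobian f (at x) + (c + d * u) *\<^sub>R e11 num"
proof -
  let ?A = "jacobian f (at x) + (c + d * u) *\<^sub>R e11 num"
  have "((\<lambda>x. Fsys num f (affine_bilinear a b c d) x u) has_derivative
        (\<lambda>h. jacobian f (at x) *v h + (c * h $ num 1 + d * u * h $ num 1) *\<^sub>R e1 num)) (at x)"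
    unfolding Fsys_affine_bilinear using jacobian_works[THEN iffD1, OF assms]
    by (auto intro!: derivative_eq_intros bounded_linear.has_derivative[OF bounded_linear_vec_nth])
  also have "(\<lambda>h. jacobian f (at x) *v h + (c * h $ num 1 + d * u * h $ num 1) *\<^sub>R e1 num)
           = (\<lambda>h. ?A *v h)"
    by (simp add: fun_eq_iff e11_mult_vec scaleR_matrix_vector_assoc[symmetric] algebra_simps)
  finally show ?thesis
    unfolding jacobian_def by (simp add: frechet_derivative_at[symmetric])
qed

lemma steady_state_linear_system:
  fixes num :: "nat \<Rightarrow> 'n::finite" and xs :: "real \<Rightarrow> real^'n"
  assumes J: "is_interval J" "\<exists>a\<in>J. \<exists>b\<in>J. a < b" and u: "u \<in> J"
    and f: "f differentiable (at (xs u))"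
    and xs: "(xs has_vector_derivative D) (at u within J)"
    and steady: "\<forall>v\<in>J. Fsys num f (affine_bilinear a b c d) (xs v) v = 0"
  shows "(jacobian f (at (xs u)) + (c + d * u) *\<^sub>R e11 num) *v D
         = - (b + d * xs u $ num 1) *\<^sub>R e1 num"
proof -
  let ?Jf = "jacobian f (at (xs u))"
  let ?V = "(?Jf + (c + d * u) *\<^sub>R e11 num) *v D + (b + d * xs u $ num 1) *\<^sub>R e1 num"
  have f': "(f has_derivative (\<lambda>h. ?Jf *v h)) (at (xs u))"
    using f jacobian_works by blast
  have xs': "(xs has_derivative (\<lambda>h. h *\<^sub>R D)) (at u within J)"
    using xs by (simp add: has_vector_derivative_def)
  have "((\<lambda>v. f (xs v) + (a + b * v + c * xs v $ num 1 + d * v * xs v $ num 1) *\<^sub>R e1 num) has_derivative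
        (\<lambda>h. ?Jf *v (h *\<^sub>R D) + (b * h + c * (h *\<^sub>R D) $ num 1
              + d * (h * xs u $ num 1 + u * (h *\<^sub>R D) $ num 1)) *\<^sub>R e1 num)) (at u within J)"
    apply (rule derivative_eq_intros has_derivative_compose[OF xs' f'] xs'
        bounded_linear.has_derivative[OF bounded_linear_vec_nth] | simp)+
    by (simp add: fun_eq_iff algebra_simps)
  also have "(\<lambda>h. ?Jf *v (h *\<^sub>R D) + (b * h + c * (h *\<^sub>R D) $ num 1
              + d * (h * xs u $ num 1 + u * (h *\<^sub>R D) $ num 1)) *\<^sub>R e1 num) = (\<lambda>h. h *\<^sub>R ?V)"
    by (simp add: fun_eq_iff e11_mult_vec scaleR_matrix_vector_assoc[symmetric] algebra_simps)
  finally have "((\<lambda>v. Fsys num f (affine_bilinear a b c d) (xs v) v) has_vector_derivative ?V)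
      (at u within J)"
    by (simp only: Fsys_affine_bilinear has_vector_derivative_def)
  then have "?V = 0"
    by (rule has_vector_derivative_zero_on_interval[OF J u, rotated]) (use steady in auto)
  then show ?thesis
    by (simp only: scaleR_minus_left eq_neg_iff_add_eq_0)
qed

lemma steady_state_sensitivity:
  fixes num :: "nat \<Rightarrow> 'n::finite" and xs :: "real \<Rightarrow> real^'n"
  assumes num: "bij_betw num {1..CARD('n)} UNIV" and j: "j \<in> {1..CARD('n)}"
    and J: "is_interval J" "\<exists>a\<in>J. \<exists>b\<in>J. a < b" and u: "u \<in> J"
    and f: "f differentiable (at (xs u))"
    and xs: "(xs has_vector_derivative D) (at u within J)"
    and steady: "\<forall>v\<in>J. Fsys num f (affine_bilinear a b c d) (xs v) v = 0"
    and nonsing: "det (jacobian (\<lambda>x. Fsys num f (affine_bilinear a b c d) x u) (at (xs u))) \<noteq> 0"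
  shows "D $ num j = (-1) ^ j * (b + d * xs u $ num 1) * minor_det num (jacobian f (at (xs u))) 1 j
                     / det (jacobian f (at (xs u)) + (c + d * u) *\<^sub>R e11 num)"
proof -
  let ?A = "jacobian f (at (xs u)) + (c + d * u) *\<^sub>R e11 num"
  have "det ?A \<noteq> 0"
    using nonsing jacobian_Fsys_affine_bilinear[OF f] by simp
  then have "D $ num j = (-1) ^ (j + 1) * - (b + d * xs u $ num 1) * minor_det num ?A 1 j / det ?A"
    by (rule cramer_e1[OF num j _ steady_state_linear_system[OF J u f xs steady]])
  then show ?thesis
    unfolding minor_det_add_e11[OF num] by (simp add: algebra_simps)
qed

theorem lemma8:
  fixes num :: "nat \<Rightarrow> 'n::finite"
    and X :: "(real^'n) set" and J :: "real set"
    and f :: "real^'n \<Rightarrow> real^'n"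
    and g :: "real \<Rightarrow> real \<Rightarrow> real"
    and xT kon koff :: real
    and xs xs' :: "real \<Rightarrow> real^'n"
    and j :: nat
  assumes num: "bij_betw num {1..CARD('n)} UNIV"
    and J_int: "is_interval J" and J_nontriv: "\<exists>a\<in>J. \<exists>b\<in>J. a < b"
    and f_diff: "\<forall>x\<in>X. f differentiable (at x)"
    and f_C1: "continuous_on X (\<lambda>x. jacobian f (at x))"
    and f_sign: "\<forall>i k. \<exists>s. \<forall>x\<in>X. sgn (jacobian f (at x) $ i $ k) = s"
    and f_diag: "\<forall>i. \<forall>x\<in>X. jacobian f (at x) $ i $ i < 0"
    and kpos: "xT > 0" "kon > 0" "koff > 0"
    and g_cases: "g = g_flow \<or> g = g_act xT kon koff \<or> g = g_inh xT kon koff"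
    and A0: "\<forall>u0\<in>J. \<exists>x0\<in>X. Fsys num f g x0 u0 = 0 \<and>
               rank (jacobian (\<lambda>x. Fsys num f g x u0) (at x0)) = CARD('n)"
    and xs_in: "\<forall>u\<in>J. xs u \<in> X"
    and xs_deriv: "\<forall>u\<in>J. (xs has_vector_derivative xs' u) (at u within J)"
    and xs'_cont: "continuous_on J xs'"
    and steady: "\<forall>u\<in>J. Fsys num f g (xs u) u = 0"
    and nonsing: "\<forall>u\<in>J. det (jacobian (\<lambda>x. Fsys num f g x u) (at (xs u))) \<noteq> 0"
    and j: "j \<in> {1..CARD('n)}"
  shows "\<forall>u\<in>J.
     (g = g_flow \<longrightarrow>
        xs' u $ num j = (-1) ^ j * minor_det num (jacobian f (at (xs u))) 1 j
                        / det (jacobian f (at (xs u)))) \<and>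
     (g = g_act xT kon koff \<longrightarrow>
        xs' u $ num j = (-1) ^ j * (xT - xs u $ num 1) * minor_det num (jacobian f (at (xs u))) 1 j
                        / det (jacobian f (at (xs u)) - (u + kon + koff) *\<^sub>R e11 num)) \<and>
     (g = g_inh xT kon koff \<longrightarrow>
        xs' u $ num j = (-1) ^ (j + 1) * (xs u $ num 1) * minor_det num (jacobian f (at (xs u))) 1 j
                        / det (jacobian f (at (xs u)) - (u + kon + koff) *\<^sub>R e11 num))"
proof -
  have sensitivity:
    "xs' u $ num j = (-1) ^ j * (b + d * xs u $ num 1) * minor_det num (jacobian f (at (xs u))) 1 j
                     / det (jacobian f (at (xs u)) + (c + d * u) *\<^sub>R e11 num)"
    if g: "g = affine_bilinear a b c d" and u: "u \<in> J" for a b c d u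
    using steady_state_sensitivity[OF num j J_int J_nontriv u]
      f_diff xs_in xs_deriv steady nonsing u
    unfolding g by blast
  have shift: "A + (- (kon + koff) + - 1 * u) *\<^sub>R e11 num = A - (u + kon + koff) *\<^sub>R e11 num"
    for A :: "real^'n^'n" and u
    by (simp add: algebra_simps)
  show ?thesis
    using sensitivity[where a = 0 and b = 1 and c = 0 and d = 0]
      sensitivity[where a = "kon * xT" and b = xT and c = "- (kon + koff)" and d = "- 1"]
      sensitivity[where a = "kon * xT" and b = 0 and c = "- (kon + koff)" and d = "- 1"]
    unfolding g_flow_eq_affine_bilinear g_act_eq_affine_bilinear g_inh_eq_affine_bilinear shift
    by simp
qed

end
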